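(* Assume $\gamma\neq\pm2$. The brackets $\{\cdot,\cdot\}_{(1)}$ and $\{\cdot,\cdot\}_{(2)}$ below, on functions of $p_1,\dots,p_N,q_{12},q_{23},\dots,q_{N-1,N}$, are compatible: for every constant $w$, the bracket $\{\cdot,\cdot\}_w=\{\cdot,\cdot\}_{(1)}+w\,\{\cdot,\cdot\}_{(2)}$ is a Poisson bracket. Equivalently, for all functions $F,G,H$, $$\{\{F,G\}_{(2)},H\}_{(1)}+\{\{G,H\}_{(2)},F\}_{(1)}+\{\{H,F\}_{(2)},G\}_{(1)}+\{\{F,G\}_{(1)},H\}_{(2)}+\{\{G,H\}_{(1)},F\}_{(2)}+\{\{H,F\}_{(1)},G\}_{(2)}=0.$$
   Context: Fix $N\ge2$, $\nu\neq0$. Variables $p_1,\dots,p_N>0$, $q_1,\dots,q_N$ pairwise distinct with fixed ordering; $q_{ij}=q_i-q_j$, $\mathfrak s_{ij}=\mathrm{sgn}(q_i-q_j)$, $\mathfrak s_{ii}=0$. The first bracket is induced from the canonical one: $\{p_i,p_k\}_{(1)}=0$, $\{q_{ij},p_k\}_{(1)}=\delta_{ik}-\delta_{jk}$, $\{q_{ij},q_{kl}\}_{(1)}=0$. With $\mathcal Q_{ik}=(\gamma-2)e^{\nu|q_{ik}|}-(\gamma+2)e^{-\nu|q_{ik}|}+4$ and $\mathcal S_{ik}=(\gamma-2)e^{\nu|q_{ik}|}+(\gamma+2)e^{-\nu|q_{ik}|}$, the second bracket is: $\{p_i,p_k\}_{(2)}=\frac{\nu}{4}\mathfrak s_{ik}p_ip_k(\mathcal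 Q_{ik}-4)$, $\{q_{ij},p_k\}_{(2)}=-\frac14p_k(\mathcal S_{ik}-\mathcal S_{jk})$, $\{q_{ij},q_{kl}\}_{(2)}=-\frac{1}{4\nu}(\mathfrak s_{ik}\mathcal Q_{ik}-\mathfrak s_{jk}\mathcal Q_{jk}-\mathfrak s_{il}\mathcal Q_{il}+\mathfrak s_{jl}\mathcal Q_{jl})$. Both are extended to arbitrary smooth functions by the Leibniz rule. *)

theory Defs
  imports "HOL-Analysis.Analysis"
begin

text \<open>Phase space points z = (p, q) with p, q :: real^'n, where CARD('n) = N.
  Functions of p_1..p_N and the differences q_ij are represented as functions of (p,q)
  that are invariant under the translation q -> q + c(1,...,1).\<close>

type_synonym 'n phase = "(real^'n) \<times> (real^'n)"

definition phase_dom :: "'n::finite phase set" where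
  "phase_dom = {z. (\<forall>i. 0 < fst z $ i) \<and> (\<forall>i j. i \<noteq> j \<longrightarrow> snd z $ i \<noteq> snd z $ j)}"

definition transl_inv :: "('n::finite phase \<Rightarrow> real) \<Rightarrow> bool" where
  "transl_inv F \<longleftrightarrow> (\<forall>z\<in>phase_dom. \<forall>c::real. F (fst z, snd z + c *\<^sub>R (\<chi> i. 1)) = F z)"

definition dirderiv :: "'a::real_normed_vector \<Rightarrow> ('a \<Rightarrow> real) \<Rightarrow> 'a \<Rightarrow> real" where
  "dirderiv u F z = deriv (\<lambda>t. F (z + t *\<^sub>R u)) 0"

fun iter_dir :: "'a::real_normed_vector list \<Rightarrow> ('a \<Rightarrow> real) \<Rightarrow> 'a \<Rightarrow> real" where
  "iter_dir [] F = F"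
| "iter_dir (u # us) F = dirderiv u (iter_dir us F)"

definition smooth_on :: "'a::real_normed_vector set \<Rightarrow> ('a \<Rightarrow> real) \<Rightarrow> bool" where
  "smooth_on D F \<longleftrightarrow> (\<forall>us. continuous_on D (iter_dir us F) \<and>
      (\<forall>z\<in>D. \<forall>u. (\<lambda>t. iter_dir us F (z + t *\<^sub>R u)) differentiable (at 0)))"

definition dp :: "('n::finite phase \<Rightarrow> real) \<Rightarrow> 'n \<Rightarrow> 'n phase \<Rightarrow> real" where
  "dp F i = dirderiv (axis i 1, 0) F"

definition dq :: "('n::finite phase \<Rightarrow> real) \<Rightarrow> 'n \<Rightarrow> 'n phase \<Rightarrow> real" where
  "dq F i = dirderiv (0, axis i 1) F"

definition sQ :: "real \<Rightarrow> real \<Rightarrow> real \<Rightarrow> real" where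
  "sQ \<gamma> \<nu> x = (\<gamma> - 2) * exp (\<nu> * \<bar>x\<bar>) - (\<gamma> + 2) * exp (- \<nu> * \<bar>x\<bar>) + 4"

definition sS :: "real \<Rightarrow> real \<Rightarrow> real \<Rightarrow> real" where
  "sS \<gamma> \<nu> x = (\<gamma> - 2) * exp (\<nu> * \<bar>x\<bar>) + (\<gamma> + 2) * exp (- \<nu> * \<bar>x\<bar>)"

text \<open>First bracket (canonical, {q_i,p_k} = delta_ik, inducing {q_ij,p_k} = delta_ik - delta_jk),
  extended by the Leibniz rule.\<close>

definition br1 :: "('n::finite phase \<Rightarrow> real) \<Rightarrow> ('n phase \<Rightarrow> real) \<Rightarrow> 'n phase \<Rightarrow> real" where
  "br1 F G z = (\<Sum>i\<in>UNIV. dq F i z * dp G i z - dp F i z * dq G i z)"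

text \<open>Second bracket, via the lift {p_i,p_k} = PP, {q_i,p_k} = QP, {q_i,q_k} = QQ, which
  reproduces exactly the paper's brackets on p_k and on differences q_ij
  ({q_ij,p_k} = QP i k - QP j k, {q_ij,q_kl} = QQ i k - QQ j k - QQ i l + QQ j l);
  on translation-invariant functions the result does not depend on the lift.\<close>

definition PP :: "real \<Rightarrow> real \<Rightarrow> 'n::finite phase \<Rightarrow> 'n \<Rightarrow> 'n \<Rightarrow> real" where
  "PP \<gamma> \<nu> z i k = \<nu> / 4 * sgn (snd z $ i - snd z $ k) * (fst z $ i) * (fst z $ k)
      * (sQ \<gamma> \<nu> (snd z $ i - snd z $ k) - 4)"

definition QP :: "real \<Rightarrow> real \<Rightarrow> 'n::finite phase \<Rightarrow> 'n \<Rightarrow> 'n \<Rightarrow> real" where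
  "QP \<gamma> \<nu> z i k = - 1 / 4 * (fst z $ k) * sS \<gamma> \<nu> (snd z $ i - snd z $ k)"

definition QQ :: "real \<Rightarrow> real \<Rightarrow> 'n::finite phase \<Rightarrow> 'n \<Rightarrow> 'n \<Rightarrow> real" where
  "QQ \<gamma> \<nu> z i k = - 1 / (4 * \<nu>) * sgn (snd z $ i - snd z $ k) * sQ \<gamma> \<nu> (snd z $ i - snd z $ k)"

definition br2 :: "real \<Rightarrow> real \<Rightarrow> ('n::finite phase \<Rightarrow> real) \<Rightarrow> ('n phase \<Rightarrow> real) \<Rightarrow> 'n phase \<Rightarrow> real" where
  "br2 \<gamma> \<nu> F G z = (\<Sum>i\<in>UNIV. \<Sum>k\<in>UNIV.
       dp F i z * dp G k z * PP \<gamma> \<nu> z i k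
     + dq F i z * dp G k z * QP \<gamma> \<nu> z i k
     - dp F k z * dq G i z * QP \<gamma> \<nu> z i k
     + dq F i z * dq G k z * QQ \<gamma> \<nu> z i k)"

definition brw :: "real \<Rightarrow> real \<Rightarrow> real \<Rightarrow> ('n::finite phase \<Rightarrow> real) \<Rightarrow> ('n phase \<Rightarrow> real) \<Rightarrow> 'n phase \<Rightarrow> real" where
  "brw \<gamma> \<nu> w F G z = br1 F G z + w * br2 \<gamma> \<nu> F G z"

end

theory Submission
  imports Defs
begin

(* Both brackets have the form {F, G}_P = sum_{a,b} P_ab(z) dF_a dG_b, where a, b run over the
   coordinates p_i, q_i and P is the canonical structure Pi_1 or the structure Pi_2 lifting the
   paper's brackets on p_k and q_ij. For antisymmetric P and R the second derivatives of F, G, H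
   drop out of the cyclic sum of {{F, G}_R, H}_P + {{F, G}_P, H}_R because Hessians are symmetric;
   what remains is the Schouten bracket [P, R] evaluated on dF, dG, dH. The addition formulas for
   sinh and cosh give [Pi_1, Pi_2] = 0 and [Pi_2, Pi_2] = E /\ Lambda, where E = sum_i d/dq_i
   generates the translations q -> q + c(1, ..., 1). Translation-invariant functions are
   annihilated by E, so on them [Pi_1 + w Pi_2, Pi_1 + w Pi_2] = 2 w [Pi_1, Pi_2] + w^2 [Pi_2, Pi_2]
   vanishes, which is the Jacobi identity for the pencil, and [Pi_1, Pi_2] = 0 is the
   compatibility. *)

section \<open>Directional derivatives\<close>

definition directionally_differentiable_on :: "'a::real_normed_vector set \<Rightarrow> ('a \<Rightarrow> real) \<Rightarrow> bool" where
  "directionally_differentiable_on D F \<longleftrightarrow>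
     (\<forall>z\<in>D. \<forall>u. (\<lambda>t. F (z + t *\<^sub>R u)) differentiable (at 0))"

lemma iter_dir_dirderiv: "iter_dir us (dirderiv u F) = iter_dir (us @ [u]) F"
  by (induction us) simp_all

lemma smooth_on_dirderiv: "smooth_on D F \<Longrightarrow> smooth_on D (dirderiv u F)"
  by (simp add: smooth_on_def iter_dir_dirderiv)

lemma smooth_on_directionally_differentiable:
  "smooth_on D F \<Longrightarrow> directionally_differentiable_on D F"
  unfolding smooth_on_def directionally_differentiable_on_def by (metis iter_dir.simps(1))

lemma smooth_on_continuous_on: "smooth_on D F \<Longrightarrow> continuous_on D F"
  unfolding smooth_on_def by (metis iter_dir.simps(1))

lemma has_real_derivative_along_line:
  assumes "directionally_differentiable_on D F" and "x + s *\<^sub>R v \<in> D"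
  shows "((\<lambda>r. F (x + r *\<^sub>R v)) has_real_derivative dirderiv v F (x + s *\<^sub>R v)) (at s)"
proof -
  let ?y = "x + s *\<^sub>R v"
  have "((\<lambda>t. F (?y + t *\<^sub>R v)) has_real_derivative dirderiv v F ?y) (at (s + - s))"
    using assms by (simp add: directionally_differentiable_on_def dirderiv_def
        DERIV_deriv_iff_real_differentiable)
  then have "((\<lambda>r. F (?y + (r + - s) *\<^sub>R v)) has_real_derivative dirderiv v F ?y) (at s)"
    by (rule DERIV_shift[THEN iffD1])
  then show ?thesis
    by (simp add: algebra_simps)
qed

lemma mvt_along_line:
  assumes "directionally_differentiable_on D F" and "0 < h" and "\<forall>t\<in>{0..h}. x + t *\<^sub>R v \<in> D"
  obtains \<theta> where "0 < \<theta>" "\<theta> < h" "F (x + h *\<^sub>R v) - F x = h * dirderiv v F (x + \<theta> *\<^sub>R v)"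
proof -
  have "\<exists>\<theta>>0. \<theta> < h \<and> F (x + h *\<^sub>R v) - F (x + 0 *\<^sub>R v) = (h - 0) * dirderiv v F (x + \<theta> *\<^sub>R v)"
    using assms by (intro MVT2) (auto intro: has_real_derivative_along_line)
  with that show ?thesis by auto
qed

lemma eventually_small_parallelogram:
  fixes y u v :: "'a::real_normed_vector"
  assumes "open S" and "y \<in> S"
  shows "\<forall>\<^sub>F h in at_right 0. \<forall>s\<in>{0..h}. \<forall>t\<in>{0..h}. y + s *\<^sub>R u + t *\<^sub>R v \<in> S"
proof -
  obtain r where "r > 0" and r: "ball y r \<subseteq> S"
    using assms open_contains_ball by blast
  define M where "M = norm u + norm v + 1"
  have "M > 0"
    by (simp add: M_def add_nonneg_pos)
  have "y + s *\<^sub>R u + t *\<^sub>R v \<in> S" if "0 < h" "h < r / M" "s \<in> {0..h}" "t \<in> {0..h}" for h s t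
  proof -
    have "norm (s *\<^sub>R u + t *\<^sub>R v) \<le> s * norm u + t * norm v"
      using norm_triangle_ineq[of "s *\<^sub>R u" "t *\<^sub>R v"] that by simp
    also have "\<dots> \<le> h * norm u + h * norm v"
      using that by (intro add_mono mult_right_mono) auto
    also have "\<dots> \<le> h * M"
      using that by (simp add: M_def algebra_simps)
    also have "\<dots> < r"
      using that \<open>M > 0\<close> by (simp add: pos_less_divide_eq)
    finally have "dist (y + s *\<^sub>R u + t *\<^sub>R v) y < r"
      by (simp add: dist_norm add.assoc)
    then show ?thesis
      using r by (auto simp: dist_commute subset_iff)
  qed
  then show ?thesis
    unfolding eventually_at_right_field using \<open>r > 0\<close> \<open>M > 0\<close>
    by (intro exI[of _ "r / M"]) auto
qed

lemma difference_quotient_tendsto_dirderiv: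
  assumes "open D" and F: "directionally_differentiable_on D F"
    and "continuous_on D (dirderiv v F)" and "y \<in> D"
  shows "((\<lambda>t. (F (y + t *\<^sub>R u + t *\<^sub>R v) - F (y + t *\<^sub>R u)) / t) \<longlongrightarrow> dirderiv v F y)
           (at_right 0)"
proof (rule tendstoI)
  fix e :: real
  assume "e > 0"
  have "isCont (dirderiv v F) y"
    using assms continuous_on_eq_continuous_at by blast
  then obtain \<delta> where "\<delta> > 0" and \<delta>: "\<And>x. dist x y < \<delta> \<Longrightarrow> dist (dirderiv v F x) (dirderiv v F y) < e"
    using \<open>e > 0\<close> unfolding continuous_at_eps_delta by blast
  have "\<forall>\<^sub>F t in at_right 0. \<forall>s\<in>{0..t}. \<forall>r\<in>{0..t}. y + s *\<^sub>R u + r *\<^sub>R v \<in> D \<inter> ball y \<delta>"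
    using assms \<open>\<delta> > 0\<close> by (intro eventually_small_parallelogram) auto
  moreover have "\<forall>\<^sub>F t in at_right 0. (0::real) < t"
    by (rule eventually_at_right_less)
  ultimately show "\<forall>\<^sub>F t in at_right 0.
      dist ((F (y + t *\<^sub>R u + t *\<^sub>R v) - F (y + t *\<^sub>R u)) / t) (dirderiv v F y) < e"
  proof eventually_elim
    case (elim t)
    then obtain \<theta> where "0 < \<theta>" "\<theta> < t"
      and mvt: "F (y + t *\<^sub>R u + t *\<^sub>R v) - F (y + t *\<^sub>R u) = t * dirderiv v F (y + t *\<^sub>R u + \<theta> *\<^sub>R v)"
      using mvt_along_line[OF F, of t "y + t *\<^sub>R u" v] by auto
    have "dist (y + t *\<^sub>R u + \<theta> *\<^sub>R v) y < \<delta>"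
      using elim \<open>0 < \<theta>\<close> \<open>\<theta> < t\<close> by (auto simp: dist_commute)
    then show ?case
      using \<delta> mvt \<open>0 < t\<close> by simp
  qed
qed

lemma dirderiv_add:
  assumes "open D" and F: "directionally_differentiable_on D F"
    and "continuous_on D (dirderiv v F)" and "y \<in> D"
  shows "dirderiv (u + v) F y = dirderiv u F y + dirderiv v F y"
proof -
  define g where "g t = F (y + t *\<^sub>R (u + v)) - F (y + t *\<^sub>R u)" for t
  have "(g has_real_derivative dirderiv (u + v) F y - dirderiv u F y) (at 0)"
    unfolding g_def using has_real_derivative_along_line[OF F, of y 0] \<open>y \<in> D\<close>
    by (intro DERIV_diff) auto
  then have "((\<lambda>t. g t / t) \<longlongrightarrow> dirderiv (u + v) F y - dirderiv u F y) (at 0)"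
    by (simp add: DERIV_def g_def)
  then have "((\<lambda>t. g t / t) \<longlongrightarrow> dirderiv (u + v) F y - dirderiv u F y) (at_right 0)"
    by (rule tendsto_mono[OF at_le, rotated]) simp
  moreover have "((\<lambda>t. g t / t) \<longlongrightarrow> dirderiv v F y) (at_right 0)"
    unfolding g_def scaleR_right_distrib add.assoc[symmetric]
    using difference_quotient_tendsto_dirderiv[OF assms] .
  ultimately show ?thesis
    using tendsto_unique[OF trivial_limit_at_right_real] by fastforce
qed

lemma dirderiv_sum:
  assumes "open D" and "smooth_on D F" and "y \<in> D" and "finite A"
  shows "dirderiv (\<Sum>i\<in>A. u i) F y = (\<Sum>i\<in>A. dirderiv (u i) F y)"
  using \<open>finite A\<close>
proof (induction A rule: finite_induct)
  case empty
  then show ?case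
    by (simp add: dirderiv_def)
next
  case (insert i A)
  have "continuous_on D (dirderiv w F)" for w
    using assms smooth_on_dirderiv smooth_on_continuous_on by blast
  with insert show ?case
    using assms by (simp add: dirderiv_add smooth_on_directionally_differentiable)
qed

lemma second_difference_mvt:
  assumes F: "directionally_differentiable_on D F"
    and DF: "directionally_differentiable_on D (dirderiv u F)"
    and "0 < h" and inD: "\<forall>s\<in>{0..h}. \<forall>t\<in>{0..h}. y + s *\<^sub>R u + t *\<^sub>R v \<in> D"
  obtains s t where "0 < s" "s < h" "0 < t" "t < h"
    "F (y + h *\<^sub>R u + h *\<^sub>R v) - F (y + h *\<^sub>R u) - F (y + h *\<^sub>R v) + F y
       = h\<^sup>2 * dirderiv v (dirderiv u F) (y + s *\<^sub>R u + t *\<^sub>R v)"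
proof -
  let ?P = "\<lambda>s t. y + s *\<^sub>R u + t *\<^sub>R v"
  have along_u: "((\<lambda>s. F (?P s t)) has_real_derivative dirderiv u F (?P s t)) (at s)"
    if "?P s t \<in> D" for s t
    using has_real_derivative_along_line[OF F, of "y + t *\<^sub>R v" s u] that
    by (simp add: algebra_simps)
  have "\<exists>s. 0 < s \<and> s < h \<and>
      (\<lambda>s. F (?P s h) - F (?P s 0)) h - (\<lambda>s. F (?P s h) - F (?P s 0)) 0
        = (h - 0) * (\<lambda>s. dirderiv u F (?P s h) - dirderiv u F (?P s 0)) s"
    by (rule MVT2[OF \<open>0 < h\<close>])
      (use inD \<open>0 < h\<close> in \<open>force intro!: DERIV_diff along_u has_real_derivative_along_line[OF F]\<close>)
  then obtain s where "0 < s" "s < h" and s: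
    "(F (?P h h) - F (?P h 0)) - (F (?P 0 h) - F (?P 0 0))
       = h * (dirderiv u F (?P s h) - dirderiv u F (?P s 0))"
    by auto
  obtain t where "0 < t" "t < h" and t:
    "dirderiv u F (?P s 0 + h *\<^sub>R v) - dirderiv u F (?P s 0)
       = h * dirderiv v (dirderiv u F) (?P s 0 + t *\<^sub>R v)"
    using mvt_along_line[OF DF \<open>0 < h\<close>, of "?P s 0" v] inD \<open>0 < s\<close> \<open>s < h\<close> by auto
  show ?thesis
  proof (rule that[OF \<open>0 < s\<close> \<open>s < h\<close> \<open>0 < t\<close> \<open>t < h\<close>])
    show "F (y + h *\<^sub>R u + h *\<^sub>R v) - F (y + h *\<^sub>R u) - F (y + h *\<^sub>R v) + F y
       = h\<^sup>2 * dirderiv v (dirderiv u F) (?P s t)"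
      using s t by (simp add: power2_eq_square algebra_simps)
  qed
qed

lemma second_difference_quotient_tendsto:
  assumes "open D" and F: "directionally_differentiable_on D F"
    and DF: "directionally_differentiable_on D (dirderiv u F)"
    and "continuous_on D (dirderiv v (dirderiv u F))" and "y \<in> D"
  shows "((\<lambda>h. (F (y + h *\<^sub>R u + h *\<^sub>R v) - F (y + h *\<^sub>R u) - F (y + h *\<^sub>R v) + F y) / h\<^sup>2)
           \<longlongrightarrow> dirderiv v (dirderiv u F) y) (at_right 0)"
proof (rule tendstoI)
  fix e :: real
  assume "e > 0"
  have "isCont (dirderiv v (dirderiv u F)) y"
    using assms continuous_on_eq_continuous_at by blast
  then obtain \<delta> where "\<delta> > 0"
    and \<delta>: "\<And>x. dist x y < \<delta> \<Longrightarrow> dist (dirderiv v (dirderiv u F) x) (dirderiv v (dirderiv u F) y) < e"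
    using \<open>e > 0\<close> unfolding continuous_at_eps_delta by blast
  have "\<forall>\<^sub>F h in at_right 0. \<forall>s\<in>{0..h}. \<forall>t\<in>{0..h}. y + s *\<^sub>R u + t *\<^sub>R v \<in> D \<inter> ball y \<delta>"
    using assms \<open>\<delta> > 0\<close> by (intro eventually_small_parallelogram) auto
  moreover have "\<forall>\<^sub>F h in at_right 0. (0::real) < h"
    by (rule eventually_at_right_less)
  ultimately show "\<forall>\<^sub>F h in at_right 0.
      dist ((F (y + h *\<^sub>R u + h *\<^sub>R v) - F (y + h *\<^sub>R u) - F (y + h *\<^sub>R v) + F y) / h\<^sup>2)
        (dirderiv v (dirderiv u F) y) < e"
  proof eventually_elim
    case (elim h)
    have inD: "\<forall>s\<in>{0..h}. \<forall>t\<in>{0..h}. y + s *\<^sub>R u + t *\<^sub>R v \<in> D"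
      using elim(1) by blast
    obtain s t where "0 < s" "s < h" "0 < t" "t < h" and mvt:
      "F (y + h *\<^sub>R u + h *\<^sub>R v) - F (y + h *\<^sub>R u) - F (y + h *\<^sub>R v) + F y
         = h\<^sup>2 * dirderiv v (dirderiv u F) (y + s *\<^sub>R u + t *\<^sub>R v)"
      by (rule second_difference_mvt[OF F DF elim(2) inD])
    have "dist (y + s *\<^sub>R u + t *\<^sub>R v) y < \<delta>"
      using elim \<open>0 < s\<close> \<open>s < h\<close> \<open>0 < t\<close> \<open>t < h\<close> by (auto simp: dist_commute)
    then show ?case
      using \<delta> mvt \<open>0 < h\<close> by simp
  qed
qed

lemma dirderiv_commute:
  assumes "open D" and "smooth_on D F" and "y \<in> D"
  shows "dirderiv v (dirderiv u F) y = dirderiv u (dirderiv v F) y"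
proof -
  have dd: "directionally_differentiable_on D (dirderiv w F)" for w
    using assms smooth_on_dirderiv smooth_on_directionally_differentiable by blast
  have cont: "continuous_on D (dirderiv w (dirderiv w' F))" for w w'
    using assms smooth_on_dirderiv smooth_on_continuous_on by blast
  have F: "directionally_differentiable_on D F"
    using assms smooth_on_directionally_differentiable by blast
  have "((\<lambda>h. (F (y + h *\<^sub>R u + h *\<^sub>R v) - F (y + h *\<^sub>R u) - F (y + h *\<^sub>R v) + F y) / h\<^sup>2)
           \<longlongrightarrow> dirderiv v (dirderiv u F) y) (at_right 0)"
    using second_difference_quotient_tendsto[OF \<open>open D\<close> F dd cont \<open>y \<in> D\<close>] .
  moreover have "((\<lambda>h. (F (y + h *\<^sub>R u + h *\<^sub>R v) - F (y + h *\<^sub>R u) - F (y + h *\<^sub>R v) + F y) / h\<^sup>2)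
           \<longlongrightarrow> dirderiv u (dirderiv v F) y) (at_right 0)"
    using second_difference_quotient_tendsto[OF \<open>open D\<close> F dd cont \<open>y \<in> D\<close>, of v u]
    by (simp add: algebra_simps)
  ultimately show ?thesis
    by (rule tendsto_unique[OF trivial_limit_at_right_real])
qed

section \<open>Brackets given by a structure matrix\<close>

definition bilinear_form :: "('c::finite \<Rightarrow> 'c \<Rightarrow> real) \<Rightarrow> ('c \<Rightarrow> real) \<Rightarrow> ('c \<Rightarrow> real) \<Rightarrow> real" where
  "bilinear_form P x y = (\<Sum>a\<in>UNIV. \<Sum>b\<in>UNIV. P a b * x a * y b)"

definition trilinear_form ::
    "('c::finite \<Rightarrow> 'c \<Rightarrow> 'c \<Rightarrow> real) \<Rightarrow> ('c \<Rightarrow> real) \<Rightarrow> ('c \<Rightarrow> real) \<Rightarrow> ('c \<Rightarrow> real) \<Rightarrow> real" where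
  "trilinear_form X f g h = (\<Sum>a\<in>UNIV. \<Sum>b\<in>UNIV. \<Sum>d\<in>UNIV. X a b d * f a * g b * h d)"

definition cyclic_sum :: "('c \<Rightarrow> 'c \<Rightarrow> 'c \<Rightarrow> real) \<Rightarrow> 'c \<Rightarrow> 'c \<Rightarrow> 'c \<Rightarrow> real" where
  "cyclic_sum X a b d = X a b d + X b d a + X d a b"

definition hamiltonian_vector :: "('c::finite \<Rightarrow> 'c \<Rightarrow> real) \<Rightarrow> ('c \<Rightarrow> real) \<Rightarrow> 'c \<Rightarrow> real" where
  "hamiltonian_vector P h c = (\<Sum>d\<in>UNIV. P c d * h d)"

definition leibniz_grad :: "('c::finite \<Rightarrow> 'c \<Rightarrow> real) \<Rightarrow> ('c \<Rightarrow> 'c \<Rightarrow> 'c \<Rightarrow> real)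
    \<Rightarrow> ('c \<Rightarrow> real) \<Rightarrow> ('c \<Rightarrow> 'c \<Rightarrow> real) \<Rightarrow> ('c \<Rightarrow> real) \<Rightarrow> ('c \<Rightarrow> 'c \<Rightarrow> real) \<Rightarrow> 'c \<Rightarrow> real" where
  "leibniz_grad P dP f f2 g g2 c =
     (\<Sum>a\<in>UNIV. \<Sum>b\<in>UNIV. dP c a b * f a * g b + P a b * f2 c a * g b + P a b * f a * g2 c b)"

(* The Schouten bracket [P, R] in coordinates is
   cyclic_sum (schouten_kernel P dR) + cyclic_sum (schouten_kernel R dP),
   where dR c is the derivative of R along the coordinate c. *)
definition schouten_kernel ::
    "('c::finite \<Rightarrow> 'c \<Rightarrow> real) \<Rightarrow> ('c \<Rightarrow> 'c \<Rightarrow> 'c \<Rightarrow> real) \<Rightarrow> 'c \<Rightarrow> 'c \<Rightarrow> 'c \<Rightarrow> real" where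
  "schouten_kernel P dR a b d = (\<Sum>c\<in>UNIV. P c d * dR c a b)"

definition wedge :: "('c \<Rightarrow> real) \<Rightarrow> ('c \<Rightarrow> 'c \<Rightarrow> real) \<Rightarrow> 'c \<Rightarrow> 'c \<Rightarrow> 'c \<Rightarrow> real" where
  "wedge E L a b d = E a * L b d + E b * L d a + E d * L a b"

lemma bilinear_form_commute:
  assumes "\<And>a b. K a b = K b a"
  shows "bilinear_form K x y = bilinear_form K y x"
  unfolding bilinear_form_def by (subst sum.swap) (simp add: assms algebra_simps)

lemma sum_rotate3:
  "(\<Sum>a\<in>UNIV. \<Sum>b\<in>UNIV. \<Sum>d\<in>UNIV. Y a b d) = (\<Sum>d\<in>UNIV. \<Sum>a\<in>UNIV. \<Sum>b\<in>UNIV. (Y a b d :: real))"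
proof -
  have "(\<Sum>a\<in>UNIV. \<Sum>b\<in>UNIV. \<Sum>d\<in>UNIV. Y a b d) = (\<Sum>a\<in>UNIV. \<Sum>d\<in>UNIV. \<Sum>b\<in>UNIV. Y a b d)"
    by (rule sum.cong[OF refl], rule sum.swap)
  also have "\<dots> = (\<Sum>d\<in>UNIV. \<Sum>a\<in>UNIV. \<Sum>b\<in>UNIV. Y a b d)"
    by (rule sum.swap)
  finally show ?thesis .
qed

lemma trilinear_form_rotate: "trilinear_form X g h f = trilinear_form (\<lambda>a b d. X b d a) f g h"
  unfolding trilinear_form_def by (subst sum_rotate3) (simp add: algebra_simps)

lemma trilinear_form_cyclic_sum:
  "trilinear_form X f g h + trilinear_form X g h f + trilinear_form X h f g = trilinear_form (cyclic_sum X) f g h"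
  unfolding trilinear_form_rotate[of X g h f] trilinear_form_rotate[of X h f g] trilinear_form_rotate[of _ g h f]
  unfolding trilinear_form_def cyclic_sum_def by (simp add: algebra_simps sum.distrib)

lemma bilinear_form_eq_sum_hamiltonian_vector:
  "bilinear_form P x y = (\<Sum>a\<in>UNIV. x a * hamiltonian_vector P y a)"
  unfolding bilinear_form_def hamiltonian_vector_def by (simp add: sum_distrib_left algebra_simps)

lemma trilinear_form_schouten_kernel:
  "trilinear_form (schouten_kernel P dR) f g h
     = (\<Sum>c\<in>UNIV. (\<Sum>a\<in>UNIV. \<Sum>b\<in>UNIV. dR c a b * f a * g b) * hamiltonian_vector P h c)"
proof -
  have "(\<Sum>c\<in>UNIV. (\<Sum>a\<in>UNIV. \<Sum>b\<in>UNIV. dR c a b * f a * g b) * hamiltonian_vector P h c)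
      = (\<Sum>c\<in>UNIV. \<Sum>a\<in>UNIV. \<Sum>b\<in>UNIV. \<Sum>d\<in>UNIV. P c d * dR c a b * f a * g b * h d)"
    by (simp add: hamiltonian_vector_def sum_distrib_left sum_distrib_right algebra_simps)
  also have "\<dots> = (\<Sum>a\<in>UNIV. \<Sum>b\<in>UNIV. \<Sum>c\<in>UNIV. \<Sum>d\<in>UNIV. P c d * dR c a b * f a * g b * h d)"
    by (subst sum_rotate3) simp
  also have "\<dots> = (\<Sum>a\<in>UNIV. \<Sum>b\<in>UNIV. \<Sum>d\<in>UNIV. \<Sum>c\<in>UNIV. P c d * dR c a b * f a * g b * h d)"
    by (rule sum.cong[OF refl], rule sum.cong[OF refl], rule sum.swap)
  also have "\<dots> = trilinear_form (schouten_kernel P dR) f g h"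
    unfolding trilinear_form_def schouten_kernel_def by (simp add: sum_distrib_right)
  finally show ?thesis
    by (rule sym)
qed

lemma bilinear_form_leibniz_grad:
  assumes "\<And>a b. R a b = - R b a"
  shows "bilinear_form P (leibniz_grad R dR f f2 g g2) h
    = trilinear_form (schouten_kernel P dR) f g h
      + bilinear_form f2 (hamiltonian_vector P h) (hamiltonian_vector R g)
      - bilinear_form g2 (hamiltonian_vector P h) (hamiltonian_vector R f)"
proof -
  have Rf: "(\<Sum>a\<in>UNIV. \<Sum>b\<in>UNIV. R a b * f a * g2 c b)
      = - (\<Sum>b\<in>UNIV. g2 c b * hamiltonian_vector R f b)" for c
  proof -
    have "R a b * f a * g2 c b = - (g2 c b * (R b a * f a))" for a b
      using assms[of a b] by simp
    then have "(\<Sum>a\<in>UNIV. \<Sum>b\<in>UNIV. R a b * f a * g2 c b) = (\<Sum>b\<in>UNIV. \<Sum>a\<in>UNIV. - (g2 c b * (R b a * f a)))"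
      by (subst sum.swap) simp
    then show ?thesis
      by (simp add: hamiltonian_vector_def sum_distrib_left sum_negf)
  qed
  have Rg: "(\<Sum>a\<in>UNIV. \<Sum>b\<in>UNIV. R a b * f2 c a * g b) = (\<Sum>a\<in>UNIV. f2 c a * hamiltonian_vector R g a)" for c
    by (simp add: hamiltonian_vector_def sum_distrib_left algebra_simps)
  have split: "leibniz_grad R dR f f2 g g2 c = (\<Sum>a\<in>UNIV. \<Sum>b\<in>UNIV. dR c a b * f a * g b)
      + (\<Sum>a\<in>UNIV. f2 c a * hamiltonian_vector R g a) - (\<Sum>b\<in>UNIV. g2 c b * hamiltonian_vector R f b)"
    for c
    unfolding leibniz_grad_def sum.distrib Rf Rg by simp
  show ?thesis
    unfolding bilinear_form_eq_sum_hamiltonian_vector[of P] split trilinear_form_schouten_kernel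
    by (simp add: bilinear_form_def sum_distrib_left sum_distrib_right sum.distrib sum_subtractf algebra_simps)
qed

lemma jacobiator_eq_schouten:
  assumes "\<And>a b. P a b = - P b a" and "\<And>a b. R a b = - R b a"
    and "\<And>a c. f2 c a = f2 a c" and "\<And>a c. g2 c a = g2 a c" and "\<And>a c. h2 c a = h2 a c"
  shows "bilinear_form P (leibniz_grad R dR f f2 g g2) h + bilinear_form P (leibniz_grad R dR g g2 h h2) f
       + bilinear_form P (leibniz_grad R dR h h2 f f2) g + bilinear_form R (leibniz_grad P dP f f2 g g2) h
       + bilinear_form R (leibniz_grad P dP g g2 h h2) f + bilinear_form R (leibniz_grad P dP h h2 f f2) g
     = trilinear_form (cyclic_sum (schouten_kernel P dR)) f g h + trilinear_form (cyclic_sum (schouten_kernel R dP)) f g h"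
  unfolding bilinear_form_leibniz_grad[OF assms(1)] bilinear_form_leibniz_grad[OF assms(2)]
    trilinear_form_cyclic_sum[symmetric]
  using bilinear_form_commute[of f2, OF assms(3)] bilinear_form_commute[of g2, OF assms(4)]
    bilinear_form_commute[of h2, OF assms(5)]
  by simp

lemma trilinear_form_wedge_eq_0:
  assumes "(\<Sum>c\<in>UNIV. E c * f c) = 0" and "(\<Sum>c\<in>UNIV. E c * g c) = 0"
    and "(\<Sum>c\<in>UNIV. E c * h c) = 0"
  shows "trilinear_form (wedge E L) f g h = 0"
proof -
  let ?X = "\<lambda>a b d. E a * L b d"
  have factor: "trilinear_form ?X x y w = (\<Sum>a\<in>UNIV. E a * x a) * bilinear_form L y w" for x y w
    unfolding trilinear_form_def bilinear_form_def sum_distrib_right by (simp add: sum_distrib_left algebra_simps)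
  have "wedge E L = cyclic_sum ?X"
    by (simp add: fun_eq_iff wedge_def cyclic_sum_def)
  then have "trilinear_form (wedge E L) f g h = trilinear_form ?X f g h + trilinear_form ?X g h f + trilinear_form ?X h f g"
    by (simp only: trilinear_form_cyclic_sum)
  then show ?thesis
    using assms by (simp add: factor)
qed

(* (False, i) stands for the momentum p_i and (True, i) for the position q_i. *)
type_synonym 'n coord = "bool \<times> 'n"

definition coord_dir :: "'n::finite coord \<Rightarrow> 'n phase" where
  "coord_dir c = (if fst c then (0, axis (snd c) 1) else (axis (snd c) 1, 0))"

definition coord_grad :: "('n::finite phase \<Rightarrow> real) \<Rightarrow> 'n phase \<Rightarrow> 'n coord \<Rightarrow> real" where
  "coord_grad F z c = dirderiv (coord_dir c) F z"

definition coord_hessian :: "('n::finite phase \<Rightarrow> real) \<Rightarrow> 'n phase \<Rightarrow> 'n coord \<Rightarrow> 'n coord \<Rightarrow> real" where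
  "coord_hessian F z c a = dirderiv (coord_dir c) (dirderiv (coord_dir a) F) z"

definition bivector_bracket :: "('n::finite phase \<Rightarrow> 'n coord \<Rightarrow> 'n coord \<Rightarrow> real)
    \<Rightarrow> ('n phase \<Rightarrow> real) \<Rightarrow> ('n phase \<Rightarrow> real) \<Rightarrow> 'n phase \<Rightarrow> real" where
  "bivector_bracket P F G z = bilinear_form (P z) (coord_grad F z) (coord_grad G z)"

lemma coord_grad_momentum: "coord_grad F z (False, i) = dp F i z"
  by (simp add: coord_grad_def coord_dir_def dp_def)

lemma coord_grad_position: "coord_grad F z (True, i) = dq F i z"
  by (simp add: coord_grad_def coord_dir_def dq_def)

lemma sum_coord:
  fixes f :: "'n::finite coord \<Rightarrow> 'a::comm_monoid_add"
  shows "(\<Sum>c\<in>UNIV. f c) = (\<Sum>i\<in>UNIV. f (False, i)) + (\<Sum>i\<in>UNIV. f (True, i))"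
proof -
  have "(UNIV :: 'n coord set) = {False, True} \<times> UNIV"
    by auto
  then have "(\<Sum>c\<in>UNIV. f c) = (\<Sum>c\<in>{False, True} \<times> UNIV. f c)"
    by simp
  also have "\<dots> = (\<Sum>b\<in>{False, True}. \<Sum>i\<in>UNIV. f (b, i))"
    by (simp add: sum.cartesian_product)
  finally show ?thesis
    by simp
qed

lemma coord_hessian_commute:
  assumes "open D" and "smooth_on D F" and "z \<in> D"
  shows "coord_hessian F z c a = coord_hessian F z a c"
  unfolding coord_hessian_def using dirderiv_commute[OF assms] by simp

lemma coord_grad_bivector_bracket:
  assumes F: "smooth_on D F" and G: "smooth_on D G" and "z \<in> D"
    and P: "\<And>c a b. ((\<lambda>t. P (z + t *\<^sub>R coord_dir c) a b) has_real_derivative dP c a b) (at 0)"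
  shows "coord_grad (bivector_bracket P F G) z
    = leibniz_grad (P z) dP (coord_grad F z) (coord_hessian F z) (coord_grad G z) (coord_hessian G z)"
proof
  fix c
  have grad: "((\<lambda>t. coord_grad K (z + t *\<^sub>R coord_dir c) a) has_real_derivative coord_hessian K z c a) (at 0)"
    if "smooth_on D K" for K a
  proof -
    have "directionally_differentiable_on D (dirderiv (coord_dir a) K)"
      using that smooth_on_dirderiv smooth_on_directionally_differentiable by blast
    from has_real_derivative_along_line[OF this, of z 0 "coord_dir c"] show ?thesis
      using \<open>z \<in> D\<close> by (simp add: coord_grad_def coord_hessian_def)
  qed
  have "((\<lambda>t. bivector_bracket P F G (z + t *\<^sub>R coord_dir c)) has_real_derivative
      leibniz_grad (P z) dP (coord_grad F z) (coord_hessian F z) (coord_grad G z) (coord_hessian G z) c) (at 0)"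
    unfolding bivector_bracket_def bilinear_form_def leibniz_grad_def
    by (rule DERIV_sum DERIV_cong[OF DERIV_mult[OF DERIV_mult[OF P grad[OF F]] grad[OF G]]])+
      (simp add: algebra_simps)
  then show "coord_grad (bivector_bracket P F G) z c
    = leibniz_grad (P z) dP (coord_grad F z) (coord_hessian F z) (coord_grad G z) (coord_hessian G z) c"
    unfolding coord_grad_def dirderiv_def by (rule DERIV_imp_deriv)
qed

lemma jacobiator_bivector_bracket:
  assumes "open D" and F: "smooth_on D F" and G: "smooth_on D G" and H: "smooth_on D H" and "z \<in> D"
    and "\<And>a b. P z a b = - P z b a" and "\<And>a b. R z a b = - R z b a"
    and dP: "\<And>c a b. ((\<lambda>t. P (z + t *\<^sub>R coord_dir c) a b) has_real_derivative dP c a b) (at 0)"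
    and dR: "\<And>c a b. ((\<lambda>t. R (z + t *\<^sub>R coord_dir c) a b) has_real_derivative dR c a b) (at 0)"
  shows "bivector_bracket P (bivector_bracket R F G) H z + bivector_bracket P (bivector_bracket R G H) F z
       + bivector_bracket P (bivector_bracket R H F) G z + bivector_bracket R (bivector_bracket P F G) H z
       + bivector_bracket R (bivector_bracket P G H) F z + bivector_bracket R (bivector_bracket P H F) G z
     = trilinear_form (cyclic_sum (schouten_kernel (P z) dR)) (coord_grad F z) (coord_grad G z) (coord_grad H z)
       + trilinear_form (cyclic_sum (schouten_kernel (R z) dP)) (coord_grad F z) (coord_grad G z) (coord_grad H z)"
  unfolding bivector_bracket_def[of _ "bivector_bracket _ _ _"]
  unfolding coord_grad_bivector_bracket[OF F G \<open>z \<in> D\<close> dP] coord_grad_bivector_bracket[OF G H \<open>z \<in> D\<close> dP]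
    coord_grad_bivector_bracket[OF H F \<open>z \<in> D\<close> dP] coord_grad_bivector_bracket[OF F G \<open>z \<in> D\<close> dR]
    coord_grad_bivector_bracket[OF G H \<open>z \<in> D\<close> dR] coord_grad_bivector_bracket[OF H F \<open>z \<in> D\<close> dR]
  using assms by (intro jacobiator_eq_schouten coord_hessian_commute)

definition translation_field :: "'n coord \<Rightarrow> real" where
  "translation_field c = of_bool (fst c)"

lemma open_phase_dom: "open (phase_dom :: 'n::finite phase set)"
proof -
  have eq: "(phase_dom :: 'n phase set) = (\<Inter>i. {z. 0 < fst z $ i}) \<inter>
      (\<Inter>i. \<Inter>j\<in>-{i}. {z. snd z $ i \<noteq> snd z $ j})"
    by (auto simp: phase_dom_def)
  have "open {z::'n phase. 0 < fst z $ i}" for i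
    by (intro open_Collect_less continuous_intros)
  moreover have "open {z::'n phase. snd z $ i \<noteq> snd z $ j}" for i j
    by (intro open_Collect_neq continuous_intros)
  ultimately show ?thesis
    unfolding eq by (intro open_Int open_INT ballI) auto
qed

lemma translation_invariant_coord_grad:
  assumes "smooth_on phase_dom F" and "transl_inv F" and "z \<in> phase_dom"
  shows "(\<Sum>c\<in>UNIV. translation_field c * coord_grad F z c) = 0"
proof -
  have shift: "(\<Sum>i\<in>UNIV. coord_dir (True, i)) = ((0::real^'n), (\<chi> i. (1::real)))"
    by (simp add: coord_dir_def prod_eq_iff fst_sum snd_sum vec_eq_iff sum_component axis_def)
  have "(\<Sum>c\<in>UNIV. translation_field c * coord_grad F z c) = (\<Sum>i\<in>UNIV. coord_grad F z (True, i))"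
    by (simp add: sum_coord translation_field_def)
  also have "\<dots> = dirderiv (0, \<chi> i. (1::real)) F z"
    unfolding coord_grad_def shift[symmetric]
    by (rule dirderiv_sum[OF open_phase_dom assms(1,3) finite, symmetric])
  also have "\<dots> = deriv (\<lambda>t. F z) 0"
  proof -
    have "z + t *\<^sub>R (0, \<chi> i. 1) = (fst z, snd z + t *\<^sub>R (\<chi> i. 1))" for t
      by (simp add: prod_eq_iff)
    then show ?thesis
      using assms(2,3) unfolding dirderiv_def transl_inv_def by simp
  qed
  finally show ?thesis
    by simp
qed

section \<open>The two structures\<close>

definition canonical_structure :: "'n coord \<Rightarrow> 'n coord \<Rightarrow> real" where
  "canonical_structure a b = (if snd a = snd b then of_bool (fst a) - of_bool (fst b) else 0)"

lemma canonical_structure_simps: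
  "canonical_structure (False, i) (False, k) = 0"
  "canonical_structure (True, i) (True, k) = 0"
  "canonical_structure (True, i) (False, k) = (if i = k then 1 else 0)"
  "canonical_structure (False, i) (True, k) = (if i = k then -1 else 0)"
  by (simp_all add: canonical_structure_def)

lemma canonical_structure_antisym: "canonical_structure a b = - canonical_structure b a"
  by (auto simp: canonical_structure_def)

lemma if_times_real: "(if P then a else b) * (c::real) = (if P then a * c else b * c)"
  by simp

lemma br1_eq_bivector_bracket: "br1 F G = bivector_bracket (\<lambda>_. canonical_structure) F G"
proof
  fix z
  show "br1 F G z = bivector_bracket (\<lambda>_. canonical_structure) F G z"
    unfolding bivector_bracket_def bilinear_form_def br1_def
    by (simp add: sum_coord coord_grad_momentum coord_grad_position canonical_structure_simps
        if_times_real sum_subtractf sum_negf cong: if_cong)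
qed

definition second_structure :: "real \<Rightarrow> real \<Rightarrow> 'n::finite phase \<Rightarrow> 'n coord \<Rightarrow> 'n coord \<Rightarrow> real" where
  "second_structure \<gamma> \<nu> z a b =
     (if fst a then (if fst b then QQ \<gamma> \<nu> z (snd a) (snd b) else QP \<gamma> \<nu> z (snd a) (snd b))
      else (if fst b then - QP \<gamma> \<nu> z (snd b) (snd a) else PP \<gamma> \<nu> z (snd a) (snd b)))"

lemma br2_eq_bivector_bracket: "br2 \<gamma> \<nu> F G = bivector_bracket (second_structure \<gamma> \<nu>) F G"
proof
  fix z
  have swap: "(\<Sum>i\<in>UNIV. \<Sum>k\<in>UNIV. dp F i z * (dq G k z * QP \<gamma> \<nu> z k i))
      = (\<Sum>i\<in>UNIV. \<Sum>k\<in>UNIV. dp F k z * (dq G i z * QP \<gamma> \<nu> z i k))"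
    by (rule sum.swap)
  show "br2 \<gamma> \<nu> F G z = bivector_bracket (second_structure \<gamma> \<nu>) F G z"
    unfolding bivector_bracket_def bilinear_form_def br2_def
    by (simp add: sum_coord coord_grad_momentum coord_grad_position second_structure_def
        sum.distrib sum_subtractf sum_negf algebra_simps swap)
qed

lemma sQ_minus: "sQ \<gamma> \<nu> (- x) = sQ \<gamma> \<nu> x"
  by (simp add: sQ_def)

lemma second_structure_antisym: "second_structure \<gamma> \<nu> z a b = - second_structure \<gamma> \<nu> z b a"
proof -
  have "PP \<gamma> \<nu> z k i = - PP \<gamma> \<nu> z i k \<and> QQ \<gamma> \<nu> z k i = - QQ \<gamma> \<nu> z i k" for i k
  proof -
    have "snd z $ k - snd z $ i = - (snd z $ i - snd z $ k)"
      by simp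
    then show ?thesis
      unfolding PP_def QQ_def by (simp only: sgn_minus sQ_minus) (simp add: algebra_simps)
  qed
  from this[of "snd a" "snd b"] show ?thesis
    by (simp add: second_structure_def)
qed

definition pp_kernel :: "real \<Rightarrow> real \<Rightarrow> real \<Rightarrow> real" where
  "pp_kernel \<gamma> \<nu> x = \<gamma> / 2 * sinh (\<nu> * x) - sgn x * cosh (\<nu> * x)"

definition qp_kernel :: "real \<Rightarrow> real \<Rightarrow> real \<Rightarrow> real" where
  "qp_kernel \<gamma> \<nu> x = sgn x * sinh (\<nu> * x) - \<gamma> / 2 * cosh (\<nu> * x)"

definition qq_kernel :: "real \<Rightarrow> real \<Rightarrow> real \<Rightarrow> real" where
  "qq_kernel \<gamma> \<nu> x = - (pp_kernel \<gamma> \<nu> x + sgn x)"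

lemma kernels_minus:
  "pp_kernel \<gamma> \<nu> (- x) = - pp_kernel \<gamma> \<nu> x"
  "qp_kernel \<gamma> \<nu> (- x) = qp_kernel \<gamma> \<nu> x"
  "qq_kernel \<gamma> \<nu> (- x) = - qq_kernel \<gamma> \<nu> x"
  by (simp_all add: pp_kernel_def qp_kernel_def qq_kernel_def sgn_minus)

lemma kernels_zero:
  "pp_kernel \<gamma> \<nu> 0 = 0" "qp_kernel \<gamma> \<nu> 0 = - \<gamma> / 2" "qq_kernel \<gamma> \<nu> 0 = 0"
  by (simp_all add: pp_kernel_def qp_kernel_def qq_kernel_def)

lemma sgn_sQ: "sgn x * sQ \<gamma> \<nu> x = 4 * pp_kernel \<gamma> \<nu> x + 4 * sgn x"
proof -
  have "sQ \<gamma> \<nu> x - 4 = 2 * \<gamma> * sinh (\<nu> * \<bar>x\<bar>) - 4 * cosh (\<nu> * \<bar>x\<bar>)"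
    by (simp add: sQ_def cosh_plus_sinh[symmetric] algebra_simps)
  then show ?thesis
    by (cases "x > 0"; cases "x < 0") (auto simp: pp_kernel_def algebra_simps)
qed

lemma sS_eq_qp_kernel: "sS \<gamma> \<nu> x = - 4 * qp_kernel \<gamma> \<nu> x"
proof -
  have "sS \<gamma> \<nu> x = 2 * \<gamma> * cosh (\<nu> * \<bar>x\<bar>) - 4 * sinh (\<nu> * \<bar>x\<bar>)"
    by (simp add: sS_def cosh_plus_sinh[symmetric] algebra_simps)
  then show ?thesis
    by (cases "x > 0"; cases "x < 0") (auto simp: qp_kernel_def algebra_simps)
qed

lemma second_structure_kernels:
  assumes "\<nu> \<noteq> 0"
  shows "second_structure \<gamma> \<nu> z a b =
    (let x = snd z $ snd a - snd z $ snd b; pa = fst z $ snd a; pb = fst z $ snd b in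
     if fst a then (if fst b then qq_kernel \<gamma> \<nu> x / \<nu> else pb * qp_kernel \<gamma> \<nu> x)
     else (if fst b then - pa * qp_kernel \<gamma> \<nu> x else \<nu> * pa * pb * pp_kernel \<gamma> \<nu> x))"
proof -
  have "qp_kernel \<gamma> \<nu> (snd z $ k - snd z $ i) = qp_kernel \<gamma> \<nu> (snd z $ i - snd z $ k)" for i k
    by (metis minus_diff_eq kernels_minus(2))
  moreover have "sgn x * (sQ \<gamma> \<nu> x - 4) = 4 * pp_kernel \<gamma> \<nu> x" for x
    using sgn_sQ[of x \<gamma> \<nu>] by (simp add: algebra_simps)
  ultimately show ?thesis
    using sgn_sQ assms
    by (simp add: second_structure_def PP_def QP_def QQ_def sS_eq_qp_kernel qq_kernel_def Let_def
        field_simps)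
qed

lemma sgn_has_real_derivative:
  assumes "x \<noteq> 0"
  shows "(sgn has_real_derivative 0) (at x)"
proof (rule has_field_derivative_transform_within_open)
  show "((\<lambda>_. sgn x) has_real_derivative 0) (at x)"
    by simp
  show "sgn x = sgn y" if "y \<in> ball x \<bar>x\<bar>" for y
    using that by (auto simp: sgn_if dist_real_def split: if_splits)
qed (use assms in auto)

lemma kernels_has_real_derivative:
  assumes "x \<noteq> 0"
  shows "(pp_kernel \<gamma> \<nu> has_real_derivative - \<nu> * qp_kernel \<gamma> \<nu> x) (at x)"
    and "(qp_kernel \<gamma> \<nu> has_real_derivative - \<nu> * pp_kernel \<gamma> \<nu> x) (at x)"
    and "(qq_kernel \<gamma> \<nu> has_real_derivative \<nu> * qp_kernel \<gamma> \<nu> x) (at x)"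
  using assms
  by (auto simp: pp_kernel_def[abs_def] qp_kernel_def[abs_def] qq_kernel_def[abs_def] algebra_simps
      intro!: derivative_eq_intros sgn_has_real_derivative)

lemma has_real_derivative_along_affine:
  assumes "d = 0 \<or> (f has_real_derivative f') (at x)"
  shows "((\<lambda>t. f (x + t * d)) has_real_derivative f' * d) (at 0)"
proof (cases "d = 0")
  case False
  then have "(f has_real_derivative f') (at (x + 0 * d))"
    using assms by simp
  then show ?thesis
    by (rule DERIV_chain2) (auto intro!: derivative_eq_intros)
qed simp

definition second_structure_dpa :: "real \<Rightarrow> real \<Rightarrow> 'n::finite phase \<Rightarrow> 'n coord \<Rightarrow> 'n coord \<Rightarrow> real" where
  "second_structure_dpa \<gamma> \<nu> z a b = (let x = snd z $ snd a - snd z $ snd b; pb = fst z $ snd b in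
     if fst a then 0 else (if fst b then - qp_kernel \<gamma> \<nu> x else \<nu> * pb * pp_kernel \<gamma> \<nu> x))"

definition second_structure_dpb :: "real \<Rightarrow> real \<Rightarrow> 'n::finite phase \<Rightarrow> 'n coord \<Rightarrow> 'n coord \<Rightarrow> real" where
  "second_structure_dpb \<gamma> \<nu> z a b = (let x = snd z $ snd a - snd z $ snd b; pa = fst z $ snd a in
     if fst b then 0 else (if fst a then qp_kernel \<gamma> \<nu> x else \<nu> * pa * pp_kernel \<gamma> \<nu> x))"

definition second_structure_dx :: "real \<Rightarrow> real \<Rightarrow> 'n::finite phase \<Rightarrow> 'n coord \<Rightarrow> 'n coord \<Rightarrow> real" where
  "second_structure_dx \<gamma> \<nu> z a b =
    (let x = snd z $ snd a - snd z $ snd b; pa = fst z $ snd a; pb = fst z $ snd b in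
     if fst a then (if fst b then qp_kernel \<gamma> \<nu> x else - \<nu> * pb * pp_kernel \<gamma> \<nu> x)
     else (if fst b then \<nu> * pa * pp_kernel \<gamma> \<nu> x else - \<nu> * \<nu> * pa * pb * qp_kernel \<gamma> \<nu> x))"

definition second_structure_deriv ::
    "real \<Rightarrow> real \<Rightarrow> 'n::finite phase \<Rightarrow> 'n phase \<Rightarrow> 'n coord \<Rightarrow> 'n coord \<Rightarrow> real" where
  "second_structure_deriv \<gamma> \<nu> z u a b =
     fst u $ snd a * second_structure_dpa \<gamma> \<nu> z a b + fst u $ snd b * second_structure_dpb \<gamma> \<nu> z a b
     + (snd u $ snd a - snd u $ snd b) * second_structure_dx \<gamma> \<nu> z a b"

lemma second_structure_has_derivative:
  assumes "\<nu> \<noteq> 0" and "z \<in> phase_dom"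
  shows "((\<lambda>t. second_structure \<gamma> \<nu> (z + t *\<^sub>R u) a b) has_real_derivative
           second_structure_deriv \<gamma> \<nu> z u a b) (at 0)"
proof -
  define x d where "x = snd z $ snd a - snd z $ snd b" and "d = snd u $ snd a - snd u $ snd b"
  \<comment> \<open>on \<open>phase_dom\<close>, \<open>x = 0\<close> only if \<open>a\<close> and \<open>b\<close> share their index, and then \<open>d = 0\<close>\<close>
  have "d = 0 \<or> x \<noteq> 0"
    using assms(2) by (cases "snd a = snd b") (auto simp: x_def d_def phase_dom_def)
  then have kernels:
      "((\<lambda>t. pp_kernel \<gamma> \<nu> (x + t * d)) has_real_derivative - \<nu> * qp_kernel \<gamma> \<nu> x * d) (at 0)"
      "((\<lambda>t. qp_kernel \<gamma> \<nu> (x + t * d)) has_real_derivative - \<nu> * pp_kernel \<gamma> \<nu> x * d) (at 0)"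
      "((\<lambda>t. qq_kernel \<gamma> \<nu> (x + t * d)) has_real_derivative \<nu> * qp_kernel \<gamma> \<nu> x * d) (at 0)"
    using kernels_has_real_derivative by (blast intro: has_real_derivative_along_affine)+
  have "snd (z + t *\<^sub>R u) $ snd a - snd (z + t *\<^sub>R u) $ snd b = x + t * d" for t
    by (simp add: x_def d_def algebra_simps)
  then have "(\<lambda>t. second_structure \<gamma> \<nu> (z + t *\<^sub>R u) a b) = (\<lambda>t.
     if fst a then (if fst b then qq_kernel \<gamma> \<nu> (x + t * d) / \<nu>
                    else (fst z $ snd b + t * fst u $ snd b) * qp_kernel \<gamma> \<nu> (x + t * d))
     else (if fst b then - (fst z $ snd a + t * fst u $ snd a) * qp_kernel \<gamma> \<nu> (x + t * d)
           else \<nu> * (fst z $ snd a + t * fst u $ snd a) * (fst z $ snd b + t * fst u $ snd b)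
                  * pp_kernel \<gamma> \<nu> (x + t * d)))"
    by (simp add: second_structure_kernels[OF assms(1)] Let_def)
  then show ?thesis
    using kernels assms(1)
    by (cases "fst a"; cases "fst b")
      (auto intro!: derivative_eq_intros simp: second_structure_deriv_def second_structure_dpa_def
        second_structure_dpb_def second_structure_dx_def Let_def x_def[symmetric] d_def[symmetric]
        algebra_simps)
qed

lemma coord_dir_components:
  "fst (coord_dir c) $ i = (if c = (False, i) then 1 else 0)"
  "snd (coord_dir c) $ i = (if c = (True, i) then 1 else 0)"
  by (cases c; auto simp: coord_dir_def axis_def)+

lemma mult_zero_if: "(x::real) * (if P then y else 0) = (if P then x * y else 0)"
  by simp

lemma schouten_kernel_second_structure_deriv:
  "schouten_kernel P (\<lambda>c. second_structure_deriv \<gamma> \<nu> z (coord_dir c)) a b d =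
     P (False, snd a) d * second_structure_dpa \<gamma> \<nu> z a b + P (False, snd b) d * second_structure_dpb \<gamma> \<nu> z a b
     + (P (True, snd a) d - P (True, snd b) d) * second_structure_dx \<gamma> \<nu> z a b"
  unfolding schouten_kernel_def second_structure_deriv_def coord_dir_components
  by (simp add: algebra_simps sum.distrib sum_subtractf mult_zero_if cong: if_cong)

section \<open>Schouten brackets of the structures\<close>

lemma kernel_addition_identities:
  shows "qp_kernel \<gamma> \<nu> d1 * (sgn (d1 + d2) - sgn d2) + qp_kernel \<gamma> \<nu> d2 * pp_kernel \<gamma> \<nu> (d1 + d2)
     - qp_kernel \<gamma> \<nu> (d1 + d2) * pp_kernel \<gamma> \<nu> d2
   = (1 - \<gamma>\<^sup>2 / 4) * sinh (\<nu> * d1)" (is ?ppq)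
  and "(qq_kernel \<gamma> \<nu> (d1 + d2) - qq_kernel \<gamma> \<nu> d2) * pp_kernel \<gamma> \<nu> d1
     + (qp_kernel \<gamma> \<nu> d1 - qp_kernel \<gamma> \<nu> (d1 + d2)) * qp_kernel \<gamma> \<nu> d2
     - (qq_kernel \<gamma> \<nu> d2 + qq_kernel \<gamma> \<nu> d1) * pp_kernel \<gamma> \<nu> (d1 + d2)
   = (1 - \<gamma>\<^sup>2 / 4) * (cosh (\<nu> * d1) - cosh (\<nu> * (d1 + d2)))" (is ?pqq)
  and "(qq_kernel \<gamma> \<nu> (d1 + d2) - qq_kernel \<gamma> \<nu> d2) * qp_kernel \<gamma> \<nu> d1
     + (qq_kernel \<gamma> \<nu> (d1 + d2) - qq_kernel \<gamma> \<nu> d1) * qp_kernel \<gamma> \<nu> d2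
     - (qq_kernel \<gamma> \<nu> d2 + qq_kernel \<gamma> \<nu> d1) * qp_kernel \<gamma> \<nu> (d1 + d2)
   = (\<gamma>\<^sup>2 / 4 - 1) * (sinh (\<nu> * d1) + sinh (\<nu> * d2) - sinh (\<nu> * (d1 + d2)))" (is ?qqq)
proof -
  define X Y X' Y' where "X = exp (\<nu> * d1)" and "Y = exp (\<nu> * d2)"
    and "X' = exp (- (\<nu> * d1))" and "Y' = exp (- (\<nu> * d2))"
  have inv: "X * X' = 1" "Y * Y' = 1"
    by (simp_all add: X_def X'_def Y_def Y'_def flip: exp_add)
  have zero: "d1 = 0 \<longrightarrow> X = 1 \<and> X' = 1" "d2 = 0 \<longrightarrow> Y = 1 \<and> Y' = 1"
    by (simp_all add: X_def Y_def X'_def Y'_def)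
  have sum: "exp (\<nu> * (d1 + d2)) = X * Y" "exp (- (\<nu> * (d1 + d2))) = X' * Y'"
    by (simp_all add: X_def Y_def X'_def Y'_def distrib_left flip: exp_add)
  note exp_form = qq_kernel_def pp_kernel_def qp_kernel_def sinh_def cosh_def sum
    X_def[symmetric] Y_def[symmetric] X'_def[symmetric] Y'_def[symmetric]
  from zero show ?ppq and ?pqq and ?qqq
    unfolding exp_form
    by (cases d1 "0::real" rule: linorder_cases; cases d2 "0::real" rule: linorder_cases;
        cases "d1 + d2" "0::real" rule: linorder_cases;
        simp add: sgn_if field_simps power2_eq_square; use inv in algebra)+
qed

lemma kernels_swap:
  fixes u v :: real
  shows "pp_kernel \<gamma> \<nu> (v - u) = - pp_kernel \<gamma> \<nu> (u - v)"
    and "qp_kernel \<gamma> \<nu> (v - u) = qp_kernel \<gamma> \<nu> (u - v)"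
    and "qq_kernel \<gamma> \<nu> (v - u) = - qq_kernel \<gamma> \<nu> (u - v)"
    and "sgn (v - u) = - sgn (u - v)"
  using kernels_minus[of \<gamma> \<nu> "u - v"] sgn_minus[of "u - v"] by simp_all

lemma schouten_kernel_canonical:
  "schouten_kernel canonical_structure dR a b d
     = (if fst d then - dR (False, snd d) a b else dR (True, snd d) a b)"
proof -
  have "canonical_structure c d = (if c = (\<not> fst d, snd d) then (if fst d then -1 else 1) else 0)" for c
    by (cases c; cases d) (auto simp: canonical_structure_def)
  then show ?thesis
    by (simp add: schouten_kernel_def if_times_real cong: if_cong)
qed

lemma second_structure_deriv_coord_dir:
  "second_structure_deriv \<gamma> \<nu> z (coord_dir (False, k)) a b
     = of_bool (k = snd a) * second_structure_dpa \<gamma> \<nu> z a b + of_bool (k = snd b) * second_structure_dpb \<gamma> \<nu> z a b"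
  "second_structure_deriv \<gamma> \<nu> z (coord_dir (True, k)) a b
     = (of_bool (k = snd a) - of_bool (k = snd b)) * second_structure_dx \<gamma> \<nu> z a b"
  by (auto simp: second_structure_deriv_def coord_dir_components)

lemma schouten_canonical_second_structure_eq_0:
  "cyclic_sum (schouten_kernel canonical_structure (\<lambda>c. second_structure_deriv \<gamma> \<nu> z (coord_dir c))) a b d = 0"
proof -
  obtain s i t j r k where abd: "a = (s, i)" "b = (t, j)" "d = (r, k)"
    by (metis prod.exhaust)
  define u v w where "u = snd z $ i" and "v = snd z $ j" and "w = snd z $ k"
  show ?thesis
    unfolding abd cyclic_sum_def schouten_kernel_canonical
    by (cases s; cases t; cases r; cases "i = j"; cases "j = k"; cases "i = k";
        simp add: second_structure_deriv_coord_dir second_structure_dpa_def second_structure_dpb_def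
          second_structure_dx_def u_def[symmetric] v_def[symmetric] w_def[symmetric]
          kernels_swap[where u=u and v=v] kernels_swap[where u=u and v=w] kernels_swap[where u=v and v=w] kernels_zero)
qed

lemma schouten_second_structure_ppq:
  assumes "\<nu> \<noteq> 0"
  shows "cyclic_sum (schouten_kernel (second_structure \<gamma> \<nu> z) (\<lambda>c. second_structure_deriv \<gamma> \<nu> z (coord_dir c)))
      (False, i) (False, j) (True, k)
    = \<nu> * (1 - \<gamma>\<^sup>2 / 4) * fst z $ i * fst z $ j * sinh (\<nu> * (snd z $ i - snd z $ j))"
proof -
  define u v w where "u = snd z $ i" and "v = snd z $ j" and "w = snd z $ k"
  have identity: "qp_kernel \<gamma> \<nu> (u - v) * (sgn (u - w) - sgn (v - w)) + qp_kernel \<gamma> \<nu> (v - w) * pp_kernel \<gamma> \<nu> (u - w)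
      - qp_kernel \<gamma> \<nu> (u - w) * pp_kernel \<gamma> \<nu> (v - w) = (1 - \<gamma>\<^sup>2 / 4) * sinh (\<nu> * (u - v))"
    using kernel_addition_identities(1)[of \<gamma> \<nu> "u - v" "v - w"] by simp
  show ?thesis
    unfolding cyclic_sum_def schouten_kernel_second_structure_deriv second_structure_kernels[OF assms]
      second_structure_dpa_def second_structure_dpb_def second_structure_dx_def Let_def
    using assms identity
    by (simp add: u_def[symmetric] v_def[symmetric] w_def[symmetric] kernels_swap[where u=u and v=v]
        kernels_swap[where u=u and v=w] kernels_swap[where u=v and v=w] kernels_zero qq_kernel_def field_simps)
      (use identity in algebra)
qed

lemma schouten_second_structure_pqq:
  assumes "\<nu> \<noteq> 0"
  shows "cyclic_sum (schouten_kernel (second_structure \<gamma> \<nu> z) (\<lambda>c. second_structure_deriv \<gamma> \<nu> z (coord_dir c)))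
      (False, i) (True, j) (True, k)
    = (1 - \<gamma>\<^sup>2 / 4) * fst z $ i * (cosh (\<nu> * (snd z $ i - snd z $ j)) - cosh (\<nu> * (snd z $ i - snd z $ k)))"
proof -
  define u v w where "u = snd z $ i" and "v = snd z $ j" and "w = snd z $ k"
  have identity: "(qq_kernel \<gamma> \<nu> (u - w) - qq_kernel \<gamma> \<nu> (v - w)) * pp_kernel \<gamma> \<nu> (u - v)
      + (qp_kernel \<gamma> \<nu> (u - v) - qp_kernel \<gamma> \<nu> (u - w)) * qp_kernel \<gamma> \<nu> (v - w)
      - (qq_kernel \<gamma> \<nu> (v - w) + qq_kernel \<gamma> \<nu> (u - v)) * pp_kernel \<gamma> \<nu> (u - w)
    = (1 - \<gamma>\<^sup>2 / 4) * (cosh (\<nu> * (u - v)) - cosh (\<nu> * (u - w)))"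
    using kernel_addition_identities(2)[of \<gamma> \<nu> "u - v" "v - w"] by simp
  show ?thesis
    unfolding cyclic_sum_def schouten_kernel_second_structure_deriv second_structure_kernels[OF assms]
      second_structure_dpa_def second_structure_dpb_def second_structure_dx_def Let_def
    using assms identity
    by (simp add: u_def[symmetric] v_def[symmetric] w_def[symmetric] kernels_swap[where u=u and v=v]
        kernels_swap[where u=u and v=w] kernels_swap[where u=v and v=w] kernels_zero field_simps)
      (use identity in algebra)
qed

lemma schouten_second_structure_qqq:
  assumes "\<nu> \<noteq> 0"
  shows "cyclic_sum (schouten_kernel (second_structure \<gamma> \<nu> z) (\<lambda>c. second_structure_deriv \<gamma> \<nu> z (coord_dir c)))
      (True, i) (True, j) (True, k)
    = (\<gamma>\<^sup>2 / 4 - 1) / \<nu> * (sinh (\<nu> * (snd z $ i - snd z $ j)) + sinh (\<nu> * (snd z $ j - snd z $ k))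
        - sinh (\<nu> * (snd z $ i - snd z $ k)))"
proof -
  define u v w where "u = snd z $ i" and "v = snd z $ j" and "w = snd z $ k"
  have identity: "(qq_kernel \<gamma> \<nu> (u - w) - qq_kernel \<gamma> \<nu> (v - w)) * qp_kernel \<gamma> \<nu> (u - v)
      + (qq_kernel \<gamma> \<nu> (u - w) - qq_kernel \<gamma> \<nu> (u - v)) * qp_kernel \<gamma> \<nu> (v - w)
      - (qq_kernel \<gamma> \<nu> (v - w) + qq_kernel \<gamma> \<nu> (u - v)) * qp_kernel \<gamma> \<nu> (u - w)
    = (\<gamma>\<^sup>2 / 4 - 1) * (sinh (\<nu> * (u - v)) + sinh (\<nu> * (v - w)) - sinh (\<nu> * (u - w)))"
    using kernel_addition_identities(3)[of \<gamma> \<nu> "u - v" "v - w"] by simp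
  show ?thesis
    unfolding cyclic_sum_def schouten_kernel_second_structure_deriv second_structure_kernels[OF assms]
      second_structure_dpa_def second_structure_dpb_def second_structure_dx_def Let_def
    using assms identity
    by (simp add: u_def[symmetric] v_def[symmetric] w_def[symmetric] kernels_swap[where u=u and v=v]
        kernels_swap[where u=u and v=w] kernels_swap[where u=v and v=w] kernels_zero field_simps)
      (use identity in algebra)
qed

lemma schouten_second_structure_ppp:
  assumes "\<nu> \<noteq> 0"
  shows "cyclic_sum (schouten_kernel (second_structure \<gamma> \<nu> z) (\<lambda>c. second_structure_deriv \<gamma> \<nu> z (coord_dir c)))
      (False, i) (False, j) (False, k) = 0"
proof -
  define u v w where "u = snd z $ i" and "v = snd z $ j" and "w = snd z $ k"
  show ?thesis
    unfolding cyclic_sum_def schouten_kernel_second_structure_deriv second_structure_kernels[OF assms]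
      second_structure_dpa_def second_structure_dpb_def second_structure_dx_def Let_def
    using assms
    by (simp add: u_def[symmetric] v_def[symmetric] w_def[symmetric] kernels_swap[where u=u and v=v]
        kernels_swap[where u=u and v=w] kernels_swap[where u=v and v=w] kernels_zero field_simps)
qed

definition second_structure_defect :: "real \<Rightarrow> real \<Rightarrow> 'n::finite phase \<Rightarrow> 'n coord \<Rightarrow> 'n coord \<Rightarrow> real" where
  "second_structure_defect \<gamma> \<nu> z a b = (1 - \<gamma>\<^sup>2 / 4) *
    (let x = snd z $ snd a - snd z $ snd b; pa = fst z $ snd a; pb = fst z $ snd b in
     if fst a then (if fst b then - sinh (\<nu> * x) / \<nu> else - pb * cosh (\<nu> * x))
     else (if fst b then pa * cosh (\<nu> * x) else \<nu> * pa * pb * sinh (\<nu> * x)))"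

lemma schouten_second_structure_eq_wedge:
  fixes z :: "'n::finite phase"
  assumes "\<nu> \<noteq> 0"
  shows "cyclic_sum (schouten_kernel (second_structure \<gamma> \<nu> z) (\<lambda>c. second_structure_deriv \<gamma> \<nu> z (coord_dir c)))
    = wedge translation_field (second_structure_defect \<gamma> \<nu> z)"
proof (intro ext)
  fix a b d :: "'n coord"
  let ?J = "cyclic_sum (schouten_kernel (second_structure \<gamma> \<nu> z) (\<lambda>c. second_structure_deriv \<gamma> \<nu> z (coord_dir c)))"
  let ?W = "wedge translation_field (second_structure_defect \<gamma> \<nu> z)"
  have cosh_swap: "cosh (\<nu> * (y - x)) = cosh (\<nu> * (x - y))" for x y
    by (metis cosh_minus minus_diff_eq mult_minus_right)
  have sinh_swap: "sinh (\<nu> * (y - x)) = - sinh (\<nu> * (x - y))" for x y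
    by (metis sinh_minus minus_diff_eq mult_minus_right)
  have ppp: "?J (False, i) (False, j) (False, k) = ?W (False, i) (False, j) (False, k)" for i j k
    by (simp add: schouten_second_structure_ppp[OF assms] wedge_def translation_field_def second_structure_defect_def)
  have ppq: "?J (False, i) (False, j) (True, k) = ?W (False, i) (False, j) (True, k)" for i j k
    by (simp add: schouten_second_structure_ppq[OF assms] wedge_def translation_field_def second_structure_defect_def; simp add: algebra_simps)
  have pqq: "?J (False, i) (True, j) (True, k) = ?W (False, i) (True, j) (True, k)" for i j k
    by (simp add: schouten_second_structure_pqq[OF assms] wedge_def translation_field_def second_structure_defect_def cosh_swap[of "snd z $ i" "snd z $ k"];
        simp add: algebra_simps)
  have qqq: "?J (True, i) (True, j) (True, k) = ?W (True, i) (True, j) (True, k)" for i j k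
    using assms
    by (simp add: schouten_second_structure_qqq[OF assms] wedge_def translation_field_def second_structure_defect_def sinh_swap[of "snd z $ i" "snd z $ k"];
        simp add: field_simps)
  have rotate: "?J a b d = ?J b d a" "?W a b d = ?W b d a" for a b d
    by (simp_all add: cyclic_sum_def wedge_def)
  obtain s i t j r k where abd: "a = (s, i)" "b = (t, j)" "d = (r, k)"
    by (metis prod.exhaust)
  show "?J a b d = ?W a b d"
    unfolding abd
    using ppp[of i j k] ppq[of i j k] ppq[of k i j] ppq[of j k i] pqq[of i j k] pqq[of k i j] pqq[of j k i]
      qqq[of i j k] rotate[of "(False, k)" "(False, i)" "(True, j)"] rotate[of "(True, i)" "(False, j)" "(False, k)"]
      rotate[of "(False, k)" "(True, i)" "(True, j)"] rotate[of "(True, i)" "(False, j)" "(True, k)"]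
    by (cases s; cases t; cases r) simp_all
qed

section \<open>The Jacobi identity\<close>

lemma bivector_bracket_pencil:
  "bivector_bracket (\<lambda>z a b. P z a b + w * R z a b) F G z
     = bivector_bracket P F G z + w * bivector_bracket R F G z"
  by (simp add: bivector_bracket_def bilinear_form_def sum.distrib sum_distrib_left algebra_simps)

lemma brw_eq_bivector_bracket:
  "brw \<gamma> \<nu> w F G = bivector_bracket (\<lambda>z a b. canonical_structure a b + w * second_structure \<gamma> \<nu> z a b) F G"
  by (simp add: fun_eq_iff brw_def br1_eq_bivector_bracket br2_eq_bivector_bracket bivector_bracket_pencil)

lemma cyclic_schouten_pencil:
  "cyclic_sum (schouten_kernel (\<lambda>a b. P a b + w * R a b) (\<lambda>c a b. w * dR c a b)) a b d
    = w * cyclic_sum (schouten_kernel P dR) a b d + w\<^sup>2 * cyclic_sum (schouten_kernel R dR) a b d"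
  by (simp add: cyclic_sum_def schouten_kernel_def sum.distrib sum_distrib_left algebra_simps power2_eq_square)

lemma trilinear_form_scale: "trilinear_form (\<lambda>a b d. c * X a b d) f g h = c * trilinear_form X f g h"
  by (simp add: trilinear_form_def sum_distrib_left algebra_simps)

lemma trilinear_form_eq_0: "(\<And>a b d. X a b d = 0) \<Longrightarrow> trilinear_form X f g h = 0"
  by (simp add: trilinear_form_def)

lemma brw_jacobi_identity:
  fixes F G H :: "'n::finite phase \<Rightarrow> real"
  assumes "\<nu> \<noteq> 0" and "z \<in> phase_dom"
    and F: "smooth_on phase_dom F" and G: "smooth_on phase_dom G" and H: "smooth_on phase_dom H"
    and "transl_inv F" and "transl_inv G" and "transl_inv H"
  shows "brw \<gamma> \<nu> w (brw \<gamma> \<nu> w F G) H z + brw \<gamma> \<nu> w (brw \<gamma> \<nu> w G H) F z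
       + brw \<gamma> \<nu> w (brw \<gamma> \<nu> w H F) G z = 0"
proof -
  define P where "P = (\<lambda>(y :: 'n phase) a b. canonical_structure a b + w * second_structure \<gamma> \<nu> y a b)"
  define dP where "dP c a b = w * second_structure_deriv \<gamma> \<nu> z (coord_dir c) a b" for c a b
  define T where "T = trilinear_form (cyclic_sum (schouten_kernel (P z) dP)) (coord_grad F z) (coord_grad G z) (coord_grad H z)"
  have brw_P: "brw \<gamma> \<nu> w X Y = bivector_bracket P X Y" for X Y
    unfolding P_def by (rule brw_eq_bivector_bracket)
  have deriv: "((\<lambda>t. P (z + t *\<^sub>R coord_dir c) a b) has_real_derivative dP c a b) (at 0)" for c a b
    unfolding P_def dP_def using assms(1,2)
    by (auto intro!: derivative_eq_intros second_structure_has_derivative)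
  have antisym: "P z a b = - P z b a" for a b
    unfolding P_def using canonical_structure_antisym second_structure_antisym
    by (metis minus_add_distrib mult_minus_right)
  have "brw \<gamma> \<nu> w (brw \<gamma> \<nu> w F G) H z + brw \<gamma> \<nu> w (brw \<gamma> \<nu> w G H) F z
      + brw \<gamma> \<nu> w (brw \<gamma> \<nu> w H F) G z + brw \<gamma> \<nu> w (brw \<gamma> \<nu> w F G) H z
      + brw \<gamma> \<nu> w (brw \<gamma> \<nu> w G H) F z + brw \<gamma> \<nu> w (brw \<gamma> \<nu> w H F) G z = T + T"
    unfolding brw_P T_def
    by (rule jacobiator_bivector_bracket[OF open_phase_dom F G H \<open>z \<in> phase_dom\<close> antisym antisym deriv deriv])
  moreover have kernel: "cyclic_sum (schouten_kernel (P z) dP)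
      = (\<lambda>a b d. w\<^sup>2 * wedge translation_field (second_structure_defect \<gamma> \<nu> z) a b d)"
    unfolding P_def dP_def cyclic_schouten_pencil schouten_canonical_second_structure_eq_0
      schouten_second_structure_eq_wedge[OF assms(1)] by simp
  then have "T = 0"
    unfolding T_def kernel trilinear_form_scale
    using assms by (simp add: trilinear_form_wedge_eq_0 translation_invariant_coord_grad)
  ultimately show ?thesis
    by linarith
qed

lemma br1_br2_compatible:
  fixes F G H :: "'n::finite phase \<Rightarrow> real"
  assumes "\<nu> \<noteq> 0" and "z \<in> phase_dom"
    and F: "smooth_on phase_dom F" and G: "smooth_on phase_dom G" and H: "smooth_on phase_dom H"
  shows "br1 (br2 \<gamma> \<nu> F G) H z + br1 (br2 \<gamma> \<nu> G H) F z + br1 (br2 \<gamma> \<nu> H F) G z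
       + br2 \<gamma> \<nu> (br1 F G) H z + br2 \<gamma> \<nu> (br1 G H) F z + br2 \<gamma> \<nu> (br1 H F) G z = 0"
proof -
  let ?dR = "\<lambda>c. second_structure_deriv \<gamma> \<nu> z (coord_dir c)"
  have "((\<lambda>t. canonical_structure a b) has_real_derivative 0) (at 0)" for a b :: "'n coord"
    by simp
  from jacobiator_bivector_bracket[OF open_phase_dom F G H \<open>z \<in> phase_dom\<close>
      canonical_structure_antisym second_structure_antisym this
      second_structure_has_derivative[OF assms(1,2)]]
  have "br1 (br2 \<gamma> \<nu> F G) H z + br1 (br2 \<gamma> \<nu> G H) F z + br1 (br2 \<gamma> \<nu> H F) G z
       + br2 \<gamma> \<nu> (br1 F G) H z + br2 \<gamma> \<nu> (br1 G H) F z + br2 \<gamma> \<nu> (br1 H F) G z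
     = trilinear_form (cyclic_sum (schouten_kernel canonical_structure ?dR)) (coord_grad F z) (coord_grad G z) (coord_grad H z)
       + trilinear_form (cyclic_sum (schouten_kernel (second_structure \<gamma> \<nu> z) (\<lambda>_ _ _. 0)))
           (coord_grad F z) (coord_grad G z) (coord_grad H z)"
    by (simp only: br1_eq_bivector_bracket br2_eq_bivector_bracket)
  also have "\<dots> = 0"
  proof -
    have "cyclic_sum (schouten_kernel (second_structure \<gamma> \<nu> z) (\<lambda>_ _ _. 0)) a b d = 0" for a b d
      by (simp add: cyclic_sum_def schouten_kernel_def)
    then show ?thesis
      by (simp add: trilinear_form_eq_0 schouten_canonical_second_structure_eq_0)
  qed
  finally show ?thesis .
qed

theorem mainTheorem10:
  fixes \<gamma> \<nu> :: real
    and F G H :: "('n::finite) phase \<Rightarrow> real"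
  assumes "CARD('n) \<ge> 2"
    and "\<nu> \<noteq> 0"
    and "\<gamma> \<noteq> 2" and "\<gamma> \<noteq> -2"
    and "smooth_on phase_dom F" and "smooth_on phase_dom G" and "smooth_on phase_dom H"
    and "transl_inv F" and "transl_inv G" and "transl_inv H"
  shows "(\<forall>w::real. \<forall>z\<in>phase_dom.
            brw \<gamma> \<nu> w (brw \<gamma> \<nu> w F G) H z + brw \<gamma> \<nu> w (brw \<gamma> \<nu> w G H) F z
          + brw \<gamma> \<nu> w (brw \<gamma> \<nu> w H F) G z = 0)
       \<and> (\<forall>z\<in>phase_dom.
            br1 (br2 \<gamma> \<nu> F G) H z + br1 (br2 \<gamma> \<nu> G H) F z + br1 (br2 \<gamma> \<nu> H F) G z
          + br2 \<gamma> \<nu> (br1 F G) H z + br2 \<gamma> \<nu> (br1 G H) F z + br2 \<gamma> \<nu> (br1 H F) G z = 0)"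
  using brw_jacobi_identity[OF assms(2) _ assms(5-10)] br1_br2_compatible[OF assms(2) _ assms(5-7)] by blast

end
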